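(* Let $d\ge1$, let $\mathcal A$ be the generator of a mass-action chemistry on $\mathbb Z_{\ge0}^d$ with a designated species $S$, and let $N$ be the associated coarse-grained compartment model with arbitrary parameters $\kappa_I,\kappa_E,\kappa_F,\kappa_C\ge0$, arbitrary inflow distribution $\mu$ (not necessarily with finite mean) and arbitrary fragmentation kernel $\psi$. Suppose there exist $w\in\mathbb R_{>0}^d$ and constants $c,c'>0$ such that, with $f(x):=w\cdot x$, we have $\mathcal Af(x)\le c f(x)+c'$ for every $x\in\mathbb Z_{\ge0}^d$. Then $N$ is not explosive.
   Context: A chemical reaction network on species $S_1,\dots,S_d$ is a finite set $\mathcal R$ of reactions $\nu\to\nu'$ with $\nu,\nu'\in\mathbb Z_{\ge0}^d$, each with a rate constant $\kappa_{\nu\to\nu'}\ge0$. Under stochastic mass-action kinetics, reaction $\nu\to\nu'$ fires in state $x\in\mathbb Z_{\ge0}^d$ at rate $\lambda_{\nu\to\nu'}(x)=\kappa_{\nu\to\nu'}\prod_{j=1}^d\binom{x_j}{\nu_j}$ (with $\binom a0=1$ and $\binom ab=0$ for $0\le a<b$) and moves the state to $x+\nu'-\nu$. The chemistry is the continuous-time Markov chain on $\mathbb Z_{\ge0}^d$ with generator $\mathcal Af(x)=\sum_{\nu\to\nu'\in\mathcal R}\lambda_{\nu\to\nu'}(x)\big(f(x+\nu'-\nu)-f(x)\big)$. One species is designated $S$, and $S(x)$ denotes the coordinate of $x$ corresponding to $S$. The coarse-grained compartment model $N$ is determined by the chemistry, constants $\kappa_I,\kappa_E,\kappa_F,\kappa_C\ge0$,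 a probability measure $\mu$ on $\mathbb Z_{\ge0}^d$, and a fragmentation kernel $\psi:\mathbb Z_{\ge0}^d\times\mathbb Z_{\ge0}^d\to[0,1]$ with $\psi(x,y)=0$ whenever $y_i>x_i$ for some $i$ and $y\mapsto\psi(x,y)$ a probability measure for each $x$. Its state space is $\mathcal N=\{n:\mathbb Z_{\ge0}^d\to\mathbb Z_{\ge0}\text{ with finite support}\}$, where $n_x$ is the number of compartments with internal state $x$; $e_x\in\mathcal N$ is the indicator of $x$. $N$ is the continuous-time Markov chain on $\mathcal N$ with generator $\mathcal LV(n)=\sum_{x}\Big[\sum_{\nu\to\nu'}n_x\lambda_{\nu\to\nu'}(x)\big(V(n-e_x+e_{x+\nu'-\nu})-V(n)\big)+\kappa_I\mu(x)\big(V(n+e_x)-V(n)\big)+\kappa_En_x\big(V(n-e_x)-V(n)\big)+\kappa_FS(x)n_x\sum_{y}\psi(x,y)\big(V(n-e_x+e_y+e_{x-y})-V(n)\big)+\kappa_C\binom{n_x}{2}\big(V(n-2e_x+e_{2x})-V(n)\big)+\sum_{y\ne x}\kappa_C\frac{n_xn_y}{2}\big(V(n-e_x-e_y+e_{x+y})-V(n)\big)\Big]$. (Thus: the chemistry runs independently inside each compartment; new compartments arrive at rate $\kappa_I$ with state distributed as $\mu$; each compartment exits at rate $\kappa_E$; a compartment in state $x$ fragments at rate $\kappa_FS(x)$ into daughters in states $y$ and $x-y$ with $y\sim\psi(x,\cdot)$; each pair of compartments coagulates at rate $\kappa_C$ into one compartment with the summed state.) A continuous-time Markov chain is explosive if from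 some initial state it makes infinitely many jumps in finite time with positive probability, and non-explosive otherwise. *)

theory Defs
  imports "HOL-Probability.Probability" "HOL-Library.Multiset"
begin

text \<open>A CTMC on a state type 's is given by its jump rates Q a b (rate of jumping from a to b).
  Self-transitions are not jumps, so they are discarded.\<close>

definition jump_rate :: "('s \<Rightarrow> 's \<Rightarrow> real) \<Rightarrow> 's \<Rightarrow> 's \<Rightarrow> real" where
  "jump_rate Q a b = (if b = a then 0 else Q a b)"

definition total_rate :: "('s \<Rightarrow> 's \<Rightarrow> real) \<Rightarrow> 's \<Rightarrow> ennreal" where
  "total_rate Q a = (\<integral>\<^sup>+ b. ennreal (jump_rate Q a b) \<partial>count_space UNIV)"

text \<open>jump_cdf Q k a t is the probability P_a(J_k \<le> t), where J_k is the k-th jump time of the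
  chain started at a (J_0 = 0; J_{k+1} = J_k + holding time; an absorbing state has infinite
  holding time).  It is computed by conditioning on the first holding time s (exponential with
  parameter q(a)) and the first jump target b (chosen with probability Q a b / q(a)).\<close>
primrec jump_cdf :: "('s \<Rightarrow> 's \<Rightarrow> real) \<Rightarrow> nat \<Rightarrow> 's \<Rightarrow> real \<Rightarrow> ennreal" where
  "jump_cdf Q 0 a t = (if 0 \<le> t then 1 else 0)"
| "jump_cdf Q (Suc k) a t =
     (\<integral>\<^sup>+ s. indicator {0..t} s *
        (\<integral>\<^sup>+ b. ennreal (jump_rate Q a b * exp (- enn2real (total_rate Q a) * s))
                  * jump_cdf Q k b (t - s) \<partial>count_space UNIV) \<partial>lborel)"

text \<open>Explosive: from some initial state, with positive probability infinitely many jumps occur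
  in finite time, i.e. P_a(\<forall>k. J_k \<le> t) = inf_k P_a(J_k \<le> t) > 0 for some a and t.\<close>
definition ctmc_explosive :: "('s \<Rightarrow> 's \<Rightarrow> real) \<Rightarrow> bool" where
  "ctmc_explosive Q \<longleftrightarrow> (\<exists>a t. (INF k. jump_cdf Q k a t) > 0)"

text \<open>Species are indexed by a finite type 'i (d = CARD('i)); states are 'i \<Rightarrow> nat.
  A reaction is a pair (\<nu>, \<nu>').\<close>

definition ma_rate :: "(('i \<Rightarrow> nat) \<times> ('i \<Rightarrow> nat) \<Rightarrow> real) \<Rightarrow> ('i \<Rightarrow> nat) \<times> ('i \<Rightarrow> nat)
    \<Rightarrow> ('i::finite \<Rightarrow> nat) \<Rightarrow> real" where
  "ma_rate \<kappa> r x = \<kappa> r * (\<Prod>j\<in>UNIV. real (x j choose fst r j))"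

text \<open>State after firing reaction r in state x (x + \<nu>' - \<nu>; only used when x \<ge> \<nu>,
  otherwise the rate vanishes).\<close>
definition react :: "('i \<Rightarrow> nat) \<times> ('i \<Rightarrow> nat) \<Rightarrow> ('i \<Rightarrow> nat) \<Rightarrow> ('i \<Rightarrow> nat)" where
  "react r x = (\<lambda>j. x j + snd r j - fst r j)"

definition chem_gen :: "(('i \<Rightarrow> nat) \<times> ('i \<Rightarrow> nat)) set \<Rightarrow> (('i \<Rightarrow> nat) \<times> ('i \<Rightarrow> nat) \<Rightarrow> real)
    \<Rightarrow> (('i::finite \<Rightarrow> nat) \<Rightarrow> real) \<Rightarrow> ('i \<Rightarrow> nat) \<Rightarrow> real" where
  "chem_gen R \<kappa> f x = (\<Sum>r\<in>R. ma_rate \<kappa> r x * (f (react r x) - f x))"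

text \<open>A state n \<in> \<N> (finitely supported counts n_x) is a multiset of compartment states;
  n_x = count n x and e_x = {#x#}.  comp_rate gives the total rate of transitions n \<rightarrow> m,
  summing the contributions of all mechanisms of the generator L.
  Parameters: s = designated species S, kI kE kF kC, inflow distribution mu,
  fragmentation kernel psi.\<close>

definition comp_rate ::
  "(('i \<Rightarrow> nat) \<times> ('i \<Rightarrow> nat)) set \<Rightarrow> (('i \<Rightarrow> nat) \<times> ('i \<Rightarrow> nat) \<Rightarrow> real) \<Rightarrow> 'i
   \<Rightarrow> real \<Rightarrow> real \<Rightarrow> real \<Rightarrow> real \<Rightarrow> ('i \<Rightarrow> nat) pmf \<Rightarrow> (('i \<Rightarrow> nat) \<Rightarrow> ('i \<Rightarrow> nat) pmf)
   \<Rightarrow> ('i::finite \<Rightarrow> nat) multiset \<Rightarrow> ('i \<Rightarrow> nat) multiset \<Rightarrow> real" where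
  "comp_rate R \<kappa> s kI kE kF kC \<mu> \<psi> n m =
     (\<Sum>x\<in>set_mset n. \<Sum>r\<in>R. real (count n x) * ma_rate \<kappa> r x *
         (if m = n - {#x#} + {#react r x#} then 1 else 0))
   + kI * measure_pmf.prob \<mu> {x. m = n + {#x#}}
   + (\<Sum>x\<in>set_mset n. kE * real (count n x) * (if m = n - {#x#} then 1 else 0))
   + (\<Sum>x\<in>set_mset n. kF * real (x s) * real (count n x) *
         measure_pmf.prob (\<psi> x) {y. m = n - {#x#} + {#y#} + {#(\<lambda>j. x j - y j)#}})
   + (\<Sum>x\<in>set_mset n. kC * real (count n x choose 2) *
         (if m = n - {#x, x#} + {#(\<lambda>j. x j + x j)#} then 1 else 0))
   + (\<Sum>x\<in>set_mset n. \<Sum>y\<in>set_mset n - {x}. kC * real (count n x) * real (count n y) / 2 *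
         (if m = n - {#x, y#} + {#(\<lambda>j. x j + y j)#} then 1 else 0))"

end

theory Submission
  imports Defs
begin

(* Let V(n) be the sum over the compartments x of n of (w . x + 1), truncated at a level K.  The
   reactions inside x raise V at rate at most c (w . x) + c'; fragmentation of x fires at rate
   kF x_S <= kF (w . x) / w_S and raises V by 1; exit and coagulation do not raise V.  Only inflow
   raises V by an unbounded amount, but after truncation its contribution kI E[min (w . x + 1) K] is
   o(K) even if mu has infinite mean.  Hence L V <= l V + D_K with D_K = o(K).
   For any chain with such a drift whose exit rates are bounded by Q_m on the finite set {V <= m},
   a first-jump analysis gives E_a[exp (-l J_k)] <= (Q_m / (l + Q_m))^k + (V a + D_K / l) / m, and
   P_a(J_k <= t) <= exp (l t) E_a[exp (-l J_k)].  Letting k -> oo with m = K / 2, and then K -> oo,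
   gives P_a(J_k <= t for all k) = 0. *)

section \<open>Non-explosion of a chain with a Lyapunov function\<close>

lemma nn_integral_exp_neg:
  assumes "0 < l"
  shows "(\<integral>\<^sup>+ s. indicator {0..} s * ennreal (exp (- l * s)) \<partial>lborel) = ennreal (1 / l)"
proof -
  have "ennreal l * (\<integral>\<^sup>+ s. indicator {0..} s * ennreal (exp (- l * s)) \<partial>lborel)
      = (\<integral>\<^sup>+ s. ennreal (exponential_density l s) \<partial>lborel)"
    using assms by (subst nn_integral_cmult[symmetric])
      (auto intro!: nn_integral_cong simp: exponential_density_def ennreal_mult'' mult.commute split: split_indicator)
  also have "\<dots> = 1"
    using prob_space.emeasure_space_1[OF prob_space_exponential_density[OF assms]]
    by (simp add: emeasure_density)
  finally have "ennreal l * (\<integral>\<^sup>+ s. indicator {0..} s * ennreal (exp (- l * s)) \<partial>lborel) = 1" .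
  then have "(\<integral>\<^sup>+ s. indicator {0..} s * ennreal (exp (- l * s)) \<partial>lborel) = 1 / ennreal l"
    using assms by (metis ennreal_mult_divide_eq ennreal_eq_0_iff ennreal_neq_top mult.commute not_le)
  then show ?thesis
    using assms divide_ennreal[of 1 l] by simp
qed

lemma nn_integral_jump_rate_eq:
  assumes "total_rate Q a \<noteq> \<top>"
  shows "(\<integral>\<^sup>+ b. ennreal (jump_rate Q a b) \<partial>count_space UNIV) = ennreal (enn2real (total_rate Q a))"
  using assms by (simp add: total_rate_def less_top)

lemma total_rate_le_nn_integral:
  assumes "\<And>b. 0 \<le> Q a b"
  shows "total_rate Q a \<le> (\<integral>\<^sup>+ b. ennreal (Q a b) \<partial>count_space UNIV)"
  unfolding total_rate_def by (intro nn_integral_mono) (simp add: jump_rate_def assms)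

lemma nn_integral_split_diagonal:
  assumes "\<And>b. 0 \<le> Q a b"
  shows "(\<integral>\<^sup>+ b. ennreal (Q a b) * g b \<partial>count_space UNIV)
    = (\<integral>\<^sup>+ b. ennreal (jump_rate Q a b) * g b \<partial>count_space UNIV) + ennreal (Q a a) * g a"
proof -
  have "(\<integral>\<^sup>+ b. ennreal (Q a b) * g b \<partial>count_space UNIV)
      = (\<integral>\<^sup>+ b. ennreal (jump_rate Q a b) * g b + (ennreal (Q a a) * g a) * indicator {a} b \<partial>count_space UNIV)"
    by (intro nn_integral_cong) (auto simp: jump_rate_def split: split_indicator)
  also have "\<dots> = (\<integral>\<^sup>+ b. ennreal (jump_rate Q a b) * g b \<partial>count_space UNIV) + ennreal (Q a a) * g a"
    by (simp add: nn_integral_add nn_integral_cmult_indicator)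
  finally show ?thesis .
qed

(* The generator bound (L V)(a) <= l V(a) + D, with the loss term q(a) V(a) moved to the right. *)
definition drift_bounded :: "('s \<Rightarrow> 's \<Rightarrow> real) \<Rightarrow> ('s \<Rightarrow> real) \<Rightarrow> real \<Rightarrow> real \<Rightarrow> bool" where
  "drift_bounded Q V l D \<longleftrightarrow> (\<forall>a.
     (\<integral>\<^sup>+ b. ennreal (jump_rate Q a b) * ennreal (V b) \<partial>count_space UNIV)
       \<le> ennreal (enn2real (total_rate Q a) * V a + l * V a + D))"

lemma jump_rate_drift_le:
  assumes Q: "\<And>b. 0 \<le> Q a b" and fin: "total_rate Q a \<noteq> \<top>" and "0 \<le> V a" "0 \<le> E"
    and drift: "(\<integral>\<^sup>+ b. ennreal (Q a b) * ennreal (V b) \<partial>count_space UNIV)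
      \<le> (\<integral>\<^sup>+ b. ennreal (Q a b) * ennreal (V a) \<partial>count_space UNIV) + ennreal E"
  shows "(\<integral>\<^sup>+ b. ennreal (jump_rate Q a b) * ennreal (V b) \<partial>count_space UNIV)
    \<le> ennreal (enn2real (total_rate Q a) * V a + E)"
proof -
  have jumps_const: "(\<integral>\<^sup>+ b. ennreal (jump_rate Q a b) * ennreal (V a) \<partial>count_space UNIV)
      = ennreal (enn2real (total_rate Q a) * V a)"
    using nn_integral_jump_rate_eq[OF fin] \<open>0 \<le> V a\<close> by (simp add: nn_integral_multc ennreal_mult'')
  have "ennreal (Q a a) * ennreal (V a) + (\<integral>\<^sup>+ b. ennreal (jump_rate Q a b) * ennreal (V b) \<partial>count_space UNIV)
      \<le> ennreal (Q a a) * ennreal (V a) + (ennreal (enn2real (total_rate Q a) * V a) + ennreal E)"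
    using drift unfolding nn_integral_split_diagonal[of Q a, OF Q] jumps_const by (simp add: ac_simps)
  then have "(\<integral>\<^sup>+ b. ennreal (jump_rate Q a b) * ennreal (V b) \<partial>count_space UNIV)
      \<le> ennreal (enn2real (total_rate Q a) * V a) + ennreal E"
    by (subst (asm) ennreal_add_left_cancel_le) (simp_all add: ennreal_mult_eq_top_iff)
  then show ?thesis
    using \<open>0 \<le> V a\<close> \<open>0 \<le> E\<close> by (simp add: ennreal_plus[symmetric] del: ennreal_plus)
qed

(* jump_laplace Q l k a = E_a[exp (-l J_k)]: the first holding time has Laplace transform
   q / (l + q), and the first jump goes to b with probability Q a b / q. *)
primrec jump_laplace :: "('s \<Rightarrow> 's \<Rightarrow> real) \<Rightarrow> real \<Rightarrow> nat \<Rightarrow> 's \<Rightarrow> ennreal" where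
  "jump_laplace Q l 0 a = 1"
| "jump_laplace Q l (Suc k) a =
     (\<integral>\<^sup>+ b. ennreal (jump_rate Q a b) * jump_laplace Q l k b \<partial>count_space UNIV)
       / ennreal (l + enn2real (total_rate Q a))"

lemma jump_laplace_le_1:
  assumes fin: "\<And>a. total_rate Q a \<noteq> \<top>" and l: "0 < l"
  shows "jump_laplace Q l k a \<le> 1"
proof (induction k arbitrary: a)
  case 0
  then show ?case by simp
next
  case (Suc k)
  define q where "q = enn2real (total_rate Q a)"
  have q: "0 \<le> q"
    by (simp add: q_def)
  have "(\<integral>\<^sup>+ b. ennreal (jump_rate Q a b) * jump_laplace Q l k b \<partial>count_space UNIV)
      \<le> (\<integral>\<^sup>+ b. ennreal (jump_rate Q a b) \<partial>count_space UNIV)"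
    using Suc.IH by (intro nn_integral_mono) (metis mult.right_neutral mult_left_mono zero_le)
  also have "\<dots> = ennreal q"
    unfolding q_def using fin by (rule nn_integral_jump_rate_eq)
  finally have "jump_laplace Q l (Suc k) a \<le> ennreal q / ennreal (l + q)"
    unfolding jump_laplace.simps q_def[symmetric] by (rule divide_right_mono_ennreal)
  also have "\<dots> = ennreal (q / (l + q))"
    using l q by (intro divide_ennreal) auto
  also have "\<dots> \<le> 1"
    using l q by simp
  finally show ?case .
qed

lemma jump_cdf_le_jump_laplace:
  assumes fin: "\<And>a. total_rate Q a \<noteq> \<top>" and l: "0 < l"
  shows "jump_cdf Q k a t \<le> ennreal (exp (l * t)) * jump_laplace Q l k a"
proof (induction k arbitrary: a t)
  case 0
  then show ?case
    using l by simp
next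
  case (Suc k)
  define q where "q = enn2real (total_rate Q a)"
  have q: "0 \<le> q"
    by (simp add: q_def)
  define S where "S = (\<integral>\<^sup>+ b. ennreal (jump_rate Q a b) * jump_laplace Q l k b \<partial>count_space UNIV)"
  have inner: "(\<integral>\<^sup>+ b. ennreal (jump_rate Q a b * exp (- q * s)) * jump_cdf Q k b (t - s) \<partial>count_space UNIV)
      \<le> ennreal (exp (l * t)) * S * ennreal (exp (- (q + l) * s))" for s
  proof -
    have exp_split: "ennreal (exp (- q * s)) * ennreal (exp (l * (t - s)))
        = ennreal (exp (l * t)) * ennreal (exp (- (q + l) * s))"
      by (simp add: ennreal_mult''[symmetric] mult_exp_exp algebra_simps del: ennreal_mult'')
    have "(\<integral>\<^sup>+ b. ennreal (jump_rate Q a b * exp (- q * s)) * jump_cdf Q k b (t - s) \<partial>count_space UNIV)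
        \<le> (\<integral>\<^sup>+ b. (ennreal (exp (l * t)) * ennreal (exp (- (q + l) * s)))
              * (ennreal (jump_rate Q a b) * jump_laplace Q l k b) \<partial>count_space UNIV)"
    proof (intro nn_integral_mono)
      fix b
      have "ennreal (jump_rate Q a b * exp (- q * s)) * jump_cdf Q k b (t - s)
          \<le> ennreal (jump_rate Q a b) * ennreal (exp (- q * s))
              * (ennreal (exp (l * (t - s))) * jump_laplace Q l k b)"
        by (simp add: ennreal_mult'' mult_left_mono Suc.IH)
      also have "\<dots> = (ennreal (exp (- q * s)) * ennreal (exp (l * (t - s))))
              * (ennreal (jump_rate Q a b) * jump_laplace Q l k b)"
        by (simp add: ac_simps)
      also note exp_split
      finally show "ennreal (jump_rate Q a b * exp (- q * s)) * jump_cdf Q k b (t - s)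
          \<le> (ennreal (exp (l * t)) * ennreal (exp (- (q + l) * s)))
              * (ennreal (jump_rate Q a b) * jump_laplace Q l k b)" .
    qed
    also have "\<dots> = ennreal (exp (l * t)) * ennreal (exp (- (q + l) * s)) * S"
      unfolding S_def by (rule nn_integral_cmult) simp
    finally show ?thesis
      by (simp add: ac_simps)
  qed
  have "jump_cdf Q (Suc k) a t
      \<le> (\<integral>\<^sup>+ s. (ennreal (exp (l * t)) * S) * (indicator {0..} s * ennreal (exp (- (q + l) * s))) \<partial>lborel)"
    unfolding jump_cdf.simps q_def[symmetric]
    by (intro nn_integral_mono) (use inner in \<open>auto split: split_indicator\<close>)
  also have "\<dots> = ennreal (exp (l * t)) * S * ennreal (1 / (q + l))"
    using l q nn_integral_exp_neg[of "q + l"] by (simp add: nn_integral_cmult)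
  also have "\<dots> = ennreal (exp (l * t)) * (S / ennreal (l + q))"
    using l q divide_ennreal[of 1 "l + q"]
    by (simp add: divide_ennreal_def add.commute mult.assoc del: ennreal_plus)
  also have "\<dots> = ennreal (exp (l * t)) * jump_laplace Q l (Suc k) a"
    by (simp only: jump_laplace.simps S_def q_def)
  finally show ?case .
qed

lemma nn_integral_jump_rate_affine_le:
  assumes fin: "total_rate Q a \<noteq> \<top>" and l: "0 < l" and m: "0 < m" and D: "0 \<le> D"
    and V: "\<And>b. 0 \<le> V b" and drift: "drift_bounded Q V l D" and \<alpha>: "0 \<le> \<alpha>"
  defines "q \<equiv> enn2real (total_rate Q a)"
  shows "(\<integral>\<^sup>+ b. ennreal (jump_rate Q a b) * ennreal (\<alpha> + (V b + D / l) / m) \<partial>count_space UNIV)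
    \<le> ennreal ((l + q) * (q / (l + q) * \<alpha> + (V a + D / l) / m))"
proof -
  have q: "0 \<le> q"
    by (simp add: q_def)
  have rate: "(\<integral>\<^sup>+ b. ennreal (jump_rate Q a b) \<partial>count_space UNIV) = ennreal q"
    unfolding q_def using fin by (rule nn_integral_jump_rate_eq)
  define I where "I = enn2real (\<integral>\<^sup>+ b. ennreal (jump_rate Q a b) * ennreal (V b) \<partial>count_space UNIV)"
  have drift_a: "(\<integral>\<^sup>+ b. ennreal (jump_rate Q a b) * ennreal (V b) \<partial>count_space UNIV)
      \<le> ennreal (q * V a + l * V a + D)"
    using drift by (simp add: drift_bounded_def q_def)
  then have I: "(\<integral>\<^sup>+ b. ennreal (jump_rate Q a b) * ennreal (V b) \<partial>count_space UNIV) = ennreal I"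
    unfolding I_def using neq_top_trans[OF ennreal_neq_top drift_a] by (simp add: less_top)
  have "0 \<le> q * V a + l * V a + D"
    using q l D V[of a] by simp
  then have I_le: "I \<le> q * V a + l * V a + D"
    using drift_a unfolding I by (metis ennreal_le_iff)
  have "(\<integral>\<^sup>+ b. ennreal (jump_rate Q a b) * ennreal (\<alpha> + (V b + D / l) / m) \<partial>count_space UNIV)
      = (\<integral>\<^sup>+ b. ennreal \<alpha> * ennreal (jump_rate Q a b)
            + ennreal (1 / m) * (ennreal (jump_rate Q a b) * ennreal (V b))
            + ennreal (D / (l * m)) * ennreal (jump_rate Q a b) \<partial>count_space UNIV)"
  proof (intro nn_integral_cong)
    fix b
    have "ennreal (\<alpha> + (V b + D / l) / m) = ennreal \<alpha> + ennreal (1 / m) * ennreal (V b) + ennreal (D / (l * m))"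
      using \<alpha> m l D V[of b] by (simp add: add_divide_distrib ennreal_mult''[symmetric] del: ennreal_mult'')
    then show "ennreal (jump_rate Q a b) * ennreal (\<alpha> + (V b + D / l) / m)
        = ennreal \<alpha> * ennreal (jump_rate Q a b)
          + ennreal (1 / m) * (ennreal (jump_rate Q a b) * ennreal (V b))
          + ennreal (D / (l * m)) * ennreal (jump_rate Q a b)"
      by (simp add: algebra_simps)
  qed
  also have "\<dots> = ennreal (\<alpha> * q + I / m + D / (l * m) * q)"
    using \<alpha> q m l D enn2real_nonneg[of "\<integral>\<^sup>+ b. ennreal (jump_rate Q a b) * ennreal (V b) \<partial>count_space UNIV"]
    unfolding I_def[symmetric]
    by (simp add: nn_integral_add nn_integral_cmult rate I ennreal_mult''[symmetric] divide_ennreal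
        del: ennreal_mult'')
  also have "\<dots> \<le> ennreal (\<alpha> * q + (q * V a + l * V a + D) / m + D / (l * m) * q)"
    using I_le m by (intro ennreal_leI add_mono order_refl divide_right_mono) auto
  also have "\<dots> = ennreal ((l + q) * (q / (l + q) * \<alpha> + (V a + D / l) / m))"
  proof -
    have "(l + q) * (q / (l + q) * \<alpha>) = \<alpha> * q"
      using l q by simp
    moreover have "(l + q) * ((V a + D / l) / m) = (q * V a + l * V a + D) / m + D / (l * m) * q"
      using l m by (simp add: field_simps)
    ultimately show ?thesis
      by (simp only: distrib_left add.assoc)
  qed
  finally show ?thesis .
qed

lemma jump_laplace_Suc_le:
  assumes fin: "total_rate Q a \<noteq> \<top>" and l: "0 < l" and m: "0 < m" and D: "0 \<le> D"
    and V: "\<And>b. 0 \<le> V b" and drift: "drift_bounded Q V l D" and \<alpha>: "0 \<le> \<alpha>"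
    and IH: "\<And>b. jump_laplace Q l k b \<le> ennreal (\<alpha> + (V b + D / l) / m)"
  defines "q \<equiv> enn2real (total_rate Q a)"
  shows "jump_laplace Q l (Suc k) a \<le> ennreal (q / (l + q) * \<alpha> + (V a + D / l) / m)"
proof -
  have "(\<integral>\<^sup>+ b. ennreal (jump_rate Q a b) * jump_laplace Q l k b \<partial>count_space UNIV)
      \<le> (\<integral>\<^sup>+ b. ennreal (jump_rate Q a b) * ennreal (\<alpha> + (V b + D / l) / m) \<partial>count_space UNIV)"
    by (intro nn_integral_mono mult_left_mono IH) simp
  also have "\<dots> \<le> ennreal ((l + q) * (q / (l + q) * \<alpha> + (V a + D / l) / m))"
    unfolding q_def by (rule nn_integral_jump_rate_affine_le[OF fin l m D V drift \<alpha>])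
  finally have "jump_laplace Q l (Suc k) a
      \<le> ennreal ((l + q) * (q / (l + q) * \<alpha> + (V a + D / l) / m)) / ennreal (l + q)"
    unfolding jump_laplace.simps q_def[symmetric] by (rule divide_right_mono_ennreal)
  also have "\<dots> = ennreal (q / (l + q) * \<alpha> + (V a + D / l) / m)"
    using l m D \<alpha> V[of a] enn2real_nonneg[of "total_rate Q a"] unfolding q_def[symmetric]
    by (subst divide_ennreal) auto
  finally show ?thesis .
qed

(* Outside the sublevel set {V <= m} the bound exceeds 1; inside it the exit rate is at most Qm,
   so each jump contracts the first term by Qm / (l + Qm). *)
lemma jump_laplace_le_Lyapunov:
  assumes fin: "\<And>a. total_rate Q a \<noteq> \<top>" and l: "0 < l" and m: "0 < m" and D: "0 \<le> D"
    and V: "\<And>b. 0 \<le> V b" and drift: "drift_bounded Q V l D"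
    and rate_bound: "\<And>a. V a \<le> m \<Longrightarrow> enn2real (total_rate Q a) \<le> Qm" and Qm: "0 \<le> Qm"
  shows "jump_laplace Q l k a \<le> ennreal ((Qm / (l + Qm)) ^ k + (V a + D / l) / m)"
proof (induction k arbitrary: a)
  case 0
  then show ?case
    using V[of a] m l D by simp
next
  case (Suc k)
  show ?case
  proof (cases "V a \<le> m")
    case True
    define q where "q = enn2real (total_rate Q a)"
    have "q \<le> Qm"
      unfolding q_def using True by (rule rate_bound)
    then have "q / (l + q) \<le> Qm / (l + Qm)"
      using l Qm by (simp add: q_def divide_simps add_pos_nonneg) (simp add: algebra_simps mult_left_mono)
    then have "q / (l + q) * (Qm / (l + Qm)) ^ k \<le> Qm / (l + Qm) * (Qm / (l + Qm)) ^ k"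
      by (rule mult_right_mono) (use l Qm in simp)
    moreover have "jump_laplace Q l (Suc k) a \<le> ennreal (q / (l + q) * (Qm / (l + Qm)) ^ k + (V a + D / l) / m)"
      unfolding q_def using l Qm by (intro jump_laplace_Suc_le fin m D V drift Suc.IH) simp_all
    ultimately show ?thesis
      by (simp only: power_Suc) (meson add_right_mono ennreal_leI order_trans)
  next
    case False
    have "1 \<le> (V a + D / l) / m"
      using False m l D by (simp add: add_increasing2)
    then have "1 \<le> (Qm / (l + Qm)) ^ Suc k + (V a + D / l) / m"
      using l Qm by (simp add: add_increasing)
    then have "1 \<le> ennreal ((Qm / (l + Qm)) ^ Suc k + (V a + D / l) / m)"
      using ennreal_leI by fastforce
    with jump_laplace_le_1[OF fin l] show ?thesis
      by (rule order_trans)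
  qed
qed

lemma INF_jump_cdf_le_Lyapunov:
  assumes fin: "\<And>a. total_rate Q a \<noteq> \<top>" and l: "0 < l" and m: "0 < m" and D: "0 \<le> D"
    and V: "\<And>b. 0 \<le> V b" and drift: "drift_bounded Q V l D" and sublevel: "finite {b. V b \<le> m}"
  shows "(INF k. jump_cdf Q k a t) \<le> ennreal (exp (l * t) * ((V a + D / l) / m))"
proof -
  define Qm where "Qm = Max (insert 0 ((\<lambda>b. enn2real (total_rate Q b)) ` {b. V b \<le> m}))"
  have Qm: "0 \<le> Qm" and rate_bound: "\<And>b. V b \<le> m \<Longrightarrow> enn2real (total_rate Q b) \<le> Qm"
    using sublevel by (auto simp: Qm_def)
  have "0 \<le> Qm / (l + Qm)" "Qm / (l + Qm) < 1"
    using l Qm by simp_all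
  then have "(\<lambda>k. (Qm / (l + Qm)) ^ k) \<longlonglongrightarrow> 0"
    by (intro LIMSEQ_power_zero) (simp only: real_norm_def abs_of_nonneg)
  then have "(\<lambda>k. ennreal (exp (l * t) * ((Qm / (l + Qm)) ^ k + (V a + D / l) / m)))
      \<longlonglongrightarrow> ennreal (exp (l * t) * (0 + (V a + D / l) / m))"
    by (intro tendsto_ennrealI tendsto_mult_left tendsto_add tendsto_const)
  moreover have "(INF k. jump_cdf Q k a t) \<le> ennreal (exp (l * t) * ((Qm / (l + Qm)) ^ k + (V a + D / l) / m))" for k
  proof -
    have "(INF k. jump_cdf Q k a t) \<le> ennreal (exp (l * t)) * jump_laplace Q l k a"
      using jump_cdf_le_jump_laplace[OF fin l] by (rule INF_lower2[OF UNIV_I])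
    also have "\<dots> \<le> ennreal (exp (l * t)) * ennreal ((Qm / (l + Qm)) ^ k + (V a + D / l) / m)"
      by (intro mult_left_mono jump_laplace_le_Lyapunov[OF fin l m D V drift rate_bound Qm]) simp_all
    also have "\<dots> = ennreal (exp (l * t) * ((Qm / (l + Qm)) ^ k + (V a + D / l) / m))"
      using l Qm m D V[of a] by (simp add: ennreal_mult)
    finally show ?thesis .
  qed
  ultimately show ?thesis
    by (intro LIMSEQ_le_const) auto
qed

lemma not_ctmc_explosive_if_Lyapunov:
  assumes fin: "\<And>a. total_rate Q a \<noteq> \<top>" and l: "0 < l"
    and Lyapunov: "\<And>a \<epsilon>. 0 < \<epsilon> \<Longrightarrow> \<exists>V m D. 0 < m \<and> 0 \<le> D \<and> (\<forall>b. 0 \<le> V b)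
        \<and> drift_bounded Q V l D \<and> finite {b. V b \<le> m} \<and> (V a + D / l) / m \<le> \<epsilon>"
  shows "\<not> ctmc_explosive Q"
proof -
  have "(INF k. jump_cdf Q k a t) \<le> 0" for a t
  proof (rule ennreal_le_epsilon)
    fix \<epsilon> :: real
    assume "0 < \<epsilon>"
    then obtain V m D where "0 < m" "0 \<le> D" "\<forall>b. 0 \<le> V b" "drift_bounded Q V l D"
      "finite {b. V b \<le> m}" and small: "(V a + D / l) / m \<le> \<epsilon> / exp (l * t)"
      using Lyapunov[of "\<epsilon> / exp (l * t)" a] by auto
    then have "(INF k. jump_cdf Q k a t) \<le> ennreal (exp (l * t) * ((V a + D / l) / m))"
      by (intro INF_jump_cdf_le_Lyapunov[OF fin l]) auto
    also have "\<dots> \<le> ennreal \<epsilon>"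
      using small by (intro ennreal_leI) (simp add: field_simps)
    finally show "(INF k. jump_cdf Q k a t) \<le> 0 + ennreal \<epsilon>"
      by simp
  qed
  then show ?thesis
    by (simp add: ctmc_explosive_def)
qed

lemma nn_integral_add_eq_ennreal:
  assumes "\<And>b. 0 \<le> f b" "\<And>b. 0 \<le> f' b" "0 \<le> F" "0 \<le> F'"
    and "(\<integral>\<^sup>+ b. ennreal (f b) * G b \<partial>count_space UNIV) = ennreal F"
    and "(\<integral>\<^sup>+ b. ennreal (f' b) * G b \<partial>count_space UNIV) = ennreal F'"
  shows "(\<integral>\<^sup>+ b. ennreal (f b + f' b) * G b \<partial>count_space UNIV) = ennreal (F + F')"
  using assms by (simp add: distrib_right nn_integral_add)

lemma nn_integral_sum_eq_ennreal:
  assumes "finite I" "\<And>i b. i \<in> I \<Longrightarrow> 0 \<le> f i b" "\<And>i. i \<in> I \<Longrightarrow> 0 \<le> F i"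
    and "\<And>i. i \<in> I \<Longrightarrow> (\<integral>\<^sup>+ b. ennreal (f i b) * G b \<partial>count_space UNIV) = ennreal (F i)"
  shows "(\<integral>\<^sup>+ b. ennreal (\<Sum>i\<in>I. f i b) * G b \<partial>count_space UNIV) = ennreal (\<Sum>i\<in>I. F i)"
proof -
  have "(\<integral>\<^sup>+ b. ennreal (\<Sum>i\<in>I. f i b) * G b \<partial>count_space UNIV)
      = (\<integral>\<^sup>+ b. (\<Sum>i\<in>I. ennreal (f i b) * G b) \<partial>count_space UNIV)"
  proof (intro nn_integral_cong)
    fix b
    have "ennreal (\<Sum>i\<in>I. f i b) = (\<Sum>i\<in>I. ennreal (f i b))"
      using assms(2) by (intro sum_ennreal[symmetric]) auto
    then show "ennreal (\<Sum>i\<in>I. f i b) * G b = (\<Sum>i\<in>I. ennreal (f i b) * G b)"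
      by (simp add: sum_distrib_right)
  qed
  also have "\<dots> = (\<Sum>i\<in>I. ennreal (F i))"
    using assms(4) by (subst nn_integral_sum) simp_all
  also have "\<dots> = ennreal (\<Sum>i\<in>I. F i)"
    using assms(3) by (rule sum_ennreal)
  finally show ?thesis .
qed

lemma nn_integral_point_mass:
  assumes "0 \<le> c"
  shows "(\<integral>\<^sup>+ b. ennreal (c * (if b = t then 1 else 0)) * ennreal (g b) \<partial>count_space UNIV) = ennreal (c * g t)"
proof -
  have "(\<integral>\<^sup>+ b. ennreal (c * (if b = t then 1 else 0)) * ennreal (g b) \<partial>count_space UNIV)
      = (\<integral>\<^sup>+ b. ennreal (c * g t) * indicator {t} b \<partial>count_space UNIV)"
    using assms by (intro nn_integral_cong) (simp add: ennreal_mult' split: split_indicator)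
  then show ?thesis
    by (simp add: nn_integral_cmult_indicator)
qed

lemma nn_integral_pmf_image:
  assumes "0 \<le> c" "\<And>b. 0 \<le> g b" "\<And>b. g b \<le> B"
  shows "(\<integral>\<^sup>+ b. ennreal (c * measure_pmf.prob p {y. b = h y}) * ennreal (g b) \<partial>count_space UNIV)
    = ennreal (c * (\<integral>y. g (h y) \<partial>p))"
proof -
  have "measure_pmf.prob p {y. b = h y} = pmf (map_pmf h p) b" for b
    by (simp add: pmf_map vimage_def eq_commute)
  then have "(\<integral>\<^sup>+ b. ennreal (c * measure_pmf.prob p {y. b = h y}) * ennreal (g b) \<partial>count_space UNIV)
      = (\<integral>\<^sup>+ b. ennreal c * (ennreal (pmf (map_pmf h p) b) * ennreal (g b)) \<partial>count_space UNIV)"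
    using assms(1) by (simp add: ennreal_mult' mult.assoc)
  also have "\<dots> = ennreal c * (\<integral>\<^sup>+ b. ennreal (pmf (map_pmf h p) b) * ennreal (g b) \<partial>count_space UNIV)"
    by (rule nn_integral_cmult) simp
  also have "\<dots> = ennreal c * (\<integral>\<^sup>+ y. ennreal (g (h y)) \<partial>p)"
    by (simp add: nn_integral_measure_pmf[symmetric])
  also have "(\<integral>\<^sup>+ y. ennreal (g (h y)) \<partial>p) = ennreal (\<integral>y. g (h y) \<partial>p)"
    using assms(2,3) by (intro nn_integral_eq_integral measure_pmf.integrable_const_bound[where B = B]) auto
  finally show ?thesis
    using assms(1) by (simp add: ennreal_mult')
qed

lemma tendsto_integral_min_div_at_top:
  fixes Y :: "'a \<Rightarrow> real"
  assumes "finite_measure M" and [measurable]: "Y \<in> borel_measurable M" and Y: "\<And>x. 0 \<le> Y x"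
  shows "((\<lambda>K. (\<integral>x. min (Y x) K \<partial>M) / K) \<longlongrightarrow> 0) at_top"
proof -
  have "((\<lambda>K. \<integral>x. min (Y x) K / K \<partial>M) \<longlongrightarrow> (\<integral>x. 0 \<partial>M)) at_top"
  proof (rule integral_dominated_convergence_at_top[where w = "\<lambda>_. 1"])
    show "integrable M (\<lambda>_. 1 :: real)"
      using \<open>finite_measure M\<close> by (simp add: finite_measure.integrable_const)
    show "AE x in M. ((\<lambda>K. min (Y x) K / K) \<longlongrightarrow> 0) at_top"
    proof (intro AE_I2)
      fix x
      have "((\<lambda>K. Y x / K) \<longlongrightarrow> 0) at_top"
        by (intro tendsto_divide_0[OF tendsto_const] filterlim_at_top_imp_at_infinity filterlim_ident)
      moreover have "\<forall>\<^sub>F K in at_top. Y x / K = min (Y x) K / K"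
        using eventually_ge_at_top[of "Y x"] by eventually_elim simp
      ultimately show "((\<lambda>K. min (Y x) K / K) \<longlongrightarrow> 0) at_top"
        by (rule Lim_transform_eventually)
    qed
    show "\<forall>\<^sub>F K in at_top. AE x in M. norm (min (Y x) K / K) \<le> 1"
      using eventually_gt_at_top[of 0] by eventually_elim (simp add: Y abs_le_iff divide_le_eq_1)
  qed simp_all
  then show ?thesis
    by simp
qed

definition species_weight :: "('i::finite \<Rightarrow> real) \<Rightarrow> ('i \<Rightarrow> nat) \<Rightarrow> real" where
  "species_weight w x = (\<Sum>j\<in>UNIV. w j * real (x j))"

(* The 1 per compartment bounds the number of compartments, which makes sublevel sets finite, and
   makes coagulation lower and fragmentation raise the weight by exactly 1. *)
definition comp_weight :: "('i::finite \<Rightarrow> real) \<Rightarrow> ('i \<Rightarrow> nat) multiset \<Rightarrow> real" where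
  "comp_weight w n = (\<Sum>x\<in>#n. species_weight w x + 1)"

lemma species_weight_nonneg: "(\<And>j. 0 \<le> w j) \<Longrightarrow> 0 \<le> species_weight w x"
  unfolding species_weight_def by (intro sum_nonneg) simp

lemma species_weight_add: "species_weight w (\<lambda>j. x j + y j) = species_weight w x + species_weight w y"
  unfolding species_weight_def by (simp add: algebra_simps sum.distrib)

lemma species_weight_diff_add:
  "(\<And>j. y j \<le> x j) \<Longrightarrow> species_weight w y + species_weight w (\<lambda>j. x j - y j) = species_weight w x"
  unfolding species_weight_def by (simp add: of_nat_diff algebra_simps sum.distrib[symmetric])

lemma coordinate_le_species_weight: "(\<And>j. 0 \<le> w j) \<Longrightarrow> w j * real (x j) \<le> species_weight w x"
  unfolding species_weight_def by (rule member_le_sum) simp_all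

lemma comp_weight_empty [simp]: "comp_weight w {#} = 0"
  by (simp add: comp_weight_def)

lemma comp_weight_add_mset [simp]: "comp_weight w (add_mset x n) = species_weight w x + 1 + comp_weight w n"
  by (simp add: comp_weight_def)

lemma comp_weight_union [simp]: "comp_weight w (n + n') = comp_weight w n + comp_weight w n'"
  by (simp add: comp_weight_def)

lemma comp_weight_diff: "n' \<subseteq># n \<Longrightarrow> comp_weight w (n - n') = comp_weight w n - comp_weight w n'"
  by (metis comp_weight_union subset_mset.diff_add add_diff_cancel_right')

lemma comp_weight_remove1:
  "x \<in># n \<Longrightarrow> comp_weight w (n - {#x#}) = comp_weight w n - (species_weight w x + 1)"
  by (simp add: comp_weight_diff)

lemma size_le_comp_weight: "(\<And>j. 0 \<le> w j) \<Longrightarrow> real (size n) \<le> comp_weight w n"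
proof (induction n)
  case empty
  then show ?case by simp
next
  case (add x n)
  then show ?case
    using species_weight_nonneg[of w x] by simp
qed

lemma comp_weight_nonneg: "(\<And>j. 0 \<le> w j) \<Longrightarrow> 0 \<le> comp_weight w n"
  using size_le_comp_weight[of w n] by simp

lemma species_weight_le_comp_weight:
  "(\<And>j. 0 \<le> w j) \<Longrightarrow> x \<in># n \<Longrightarrow> species_weight w x + 1 \<le> comp_weight w n"
  using comp_weight_nonneg[of w "n - {#x#}"] by (simp add: comp_weight_diff)

lemma sum_mset_eq_sum_count:
  fixes f :: "'a \<Rightarrow> 'b::semiring_1"
  shows "(\<Sum>x\<in>#M. f x) = (\<Sum>x\<in>set_mset M. of_nat (count M x) * f x)"
proof (induction M)
  case empty
  then show ?case by simp
next
  case (add a M)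
  have "(\<Sum>x\<in>set_mset (add_mset a M). of_nat (count (add_mset a M) x) * f x)
      = (\<Sum>x\<in>insert a (set_mset M). of_nat (count M x) * f x + (if x = a then f x else 0))"
    by (intro sum.cong) (auto simp: algebra_simps)
  also have "\<dots> = (\<Sum>x\<in>insert a (set_mset M). of_nat (count M x) * f x) + f a"
    by (simp add: sum.distrib)
  also have "\<dots> = (\<Sum>x\<in>set_mset M. of_nat (count M x) * f x) + f a"
    by (cases "a \<in># M") (simp_all add: insert_absorb not_in_iff)
  finally show ?case
    using add.IH by (simp add: add.commute)
qed

lemma finite_comp_weight_le:
  fixes w :: "'i::finite \<Rightarrow> real"
  assumes w: "\<And>j. 0 < w j"
  shows "finite {n. comp_weight w n \<le> m}"
proof -
  define B where "B = nat \<lceil>\<Sum>j\<in>UNIV. \<bar>m\<bar> / w j\<rceil>"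
  define X where "X = {x :: 'i \<Rightarrow> nat. \<forall>j. x j \<in> {..B}}"
  have "finite X"
    using finite_set_of_finite_funs[of "UNIV :: 'i set" "{..B}" 0] by (simp add: X_def)
  have w_nonneg: "\<And>j. 0 \<le> w j"
    using w by (simp add: less_imp_le)
  have "{n. comp_weight w n \<le> m} \<subseteq> (\<Union>k\<in>{..nat \<lceil>m\<rceil>}. multisets_of_size X k)"
  proof
    fix n
    assume "n \<in> {n. comp_weight w n \<le> m}"
    then have n: "comp_weight w n \<le> m"
      by simp
    have "x j \<in> {..B}" if "x \<in># n" for x j
    proof -
      have "w j * real (x j) \<le> m"
        using coordinate_le_species_weight[of w j x, OF w_nonneg]
          species_weight_le_comp_weight[of w, OF w_nonneg that] n
        by linarith
      then have "real (x j) \<le> \<bar>m\<bar> / w j"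
        using w[of j] by (simp add: field_simps)
      also have "\<dots> \<le> (\<Sum>j\<in>UNIV. \<bar>m\<bar> / w j)"
        using w_nonneg by (intro member_le_sum) simp_all
      finally show ?thesis
        unfolding B_def by simp linarith
    qed
    moreover have "size n \<le> nat \<lceil>m\<rceil>"
      using size_le_comp_weight[of w n, OF w_nonneg] n by linarith
    ultimately show "n \<in> (\<Union>k\<in>{..nat \<lceil>m\<rceil>}. multisets_of_size X k)"
      by (auto simp: multisets_of_size_def X_def)
  qed
  moreover have "finite (\<Union>k\<in>{..nat \<lceil>m\<rceil>}. multisets_of_size X k)"
    using \<open>finite X\<close> by auto
  ultimately show ?thesis
    by (rule finite_subset)
qed

section \<open>The compartment model\<close>

locale compartment_model =
  fixes R :: "(('i::finite \<Rightarrow> nat) \<times> ('i \<Rightarrow> nat)) set"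
    and \<kappa> :: "('i \<Rightarrow> nat) \<times> ('i \<Rightarrow> nat) \<Rightarrow> real"
    and s :: 'i
    and kI kE kF kC :: real
    and \<mu> :: "('i \<Rightarrow> nat) pmf"
    and \<psi> :: "('i \<Rightarrow> nat) \<Rightarrow> ('i \<Rightarrow> nat) pmf"
  assumes finite_reactions: "finite R"
    and \<kappa>_nonneg: "\<And>r. r \<in> R \<Longrightarrow> 0 \<le> \<kappa> r"
    and kI_nonneg: "0 \<le> kI" and kE_nonneg: "0 \<le> kE" and kF_nonneg: "0 \<le> kF" and kC_nonneg: "0 \<le> kC"
    and fragment_le: "\<And>x y j. y \<in> set_pmf (\<psi> x) \<Longrightarrow> y j \<le> x j"
begin

abbreviation rate :: "('i \<Rightarrow> nat) multiset \<Rightarrow> ('i \<Rightarrow> nat) multiset \<Rightarrow> real" where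
  "rate \<equiv> comp_rate R \<kappa> s kI kE kF kC \<mu> \<psi>"

definition reaction_flux :: "('i \<Rightarrow> nat) multiset \<Rightarrow> (('i \<Rightarrow> nat) multiset \<Rightarrow> real) \<Rightarrow> real" where
  "reaction_flux n g =
     (\<Sum>x\<in>set_mset n. \<Sum>r\<in>R. real (count n x) * ma_rate \<kappa> r x * g (n - {#x#} + {#react r x#}))"

definition inflow_flux :: "('i \<Rightarrow> nat) multiset \<Rightarrow> (('i \<Rightarrow> nat) multiset \<Rightarrow> real) \<Rightarrow> real" where
  "inflow_flux n g = kI * (\<integral>x. g (n + {#x#}) \<partial>\<mu>)"

definition exit_flux :: "('i \<Rightarrow> nat) multiset \<Rightarrow> (('i \<Rightarrow> nat) multiset \<Rightarrow> real) \<Rightarrow> real" where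
  "exit_flux n g = (\<Sum>x\<in>set_mset n. kE * real (count n x) * g (n - {#x#}))"

definition fragmentation_flux :: "('i \<Rightarrow> nat) multiset \<Rightarrow> (('i \<Rightarrow> nat) multiset \<Rightarrow> real) \<Rightarrow> real" where
  "fragmentation_flux n g = (\<Sum>x\<in>set_mset n. kF * real (x s) * real (count n x) *
     (\<integral>y. g (n - {#x#} + {#y#} + {#(\<lambda>j. x j - y j)#}) \<partial>\<psi> x))"

definition coagulation_flux :: "('i \<Rightarrow> nat) multiset \<Rightarrow> (('i \<Rightarrow> nat) multiset \<Rightarrow> real) \<Rightarrow> real" where
  "coagulation_flux n g =
     (\<Sum>x\<in>set_mset n. kC * real (count n x choose 2) * g (n - {#x, x#} + {#(\<lambda>j. x j + x j)#}))
   + (\<Sum>x\<in>set_mset n. \<Sum>y\<in>set_mset n - {x}. kC * real (count n x) * real (count n y) / 2 *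
       g (n - {#x, y#} + {#(\<lambda>j. x j + y j)#}))"

definition flux :: "('i \<Rightarrow> nat) multiset \<Rightarrow> (('i \<Rightarrow> nat) multiset \<Rightarrow> real) \<Rightarrow> real" where
  "flux n g = reaction_flux n g + inflow_flux n g + exit_flux n g + fragmentation_flux n g
     + coagulation_flux n g"

lemma ma_rate_nonneg: "r \<in> R \<Longrightarrow> 0 \<le> ma_rate \<kappa> r x"
  unfolding ma_rate_def by (simp add: \<kappa>_nonneg prod_nonneg)

lemma rate_nonneg: "0 \<le> rate n m"
  unfolding comp_rate_def
  by (intro add_nonneg_nonneg sum_nonneg mult_nonneg_nonneg)
    (auto simp: ma_rate_nonneg kI_nonneg kE_nonneg kF_nonneg kC_nonneg)

lemma flux_nonneg:
  assumes "\<And>b. 0 \<le> g b"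
  shows "0 \<le> flux n g"
  unfolding flux_def reaction_flux_def inflow_flux_def exit_flux_def fragmentation_flux_def
    coagulation_flux_def using assms
  by (intro add_nonneg_nonneg sum_nonneg mult_nonneg_nonneg integral_nonneg_AE AE_I2)
    (auto simp: ma_rate_nonneg kI_nonneg kE_nonneg kF_nonneg kC_nonneg)

lemma nn_integral_rate:
  assumes "\<And>b. 0 \<le> g b" "\<And>b. g b \<le> B"
  shows "(\<integral>\<^sup>+ b. ennreal (rate n b) * ennreal (g b) \<partial>count_space UNIV) = ennreal (flux n g)"
  unfolding comp_rate_def flux_def reaction_flux_def inflow_flux_def exit_flux_def
    fragmentation_flux_def coagulation_flux_def add.assoc
  using assms
  by (intro nn_integral_add_eq_ennreal nn_integral_sum_eq_ennreal nn_integral_point_mass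
      nn_integral_pmf_image finite_reactions finite_set_mset finite_Diff add_nonneg_nonneg sum_nonneg
      mult_nonneg_nonneg integral_nonneg_AE AE_I2)
    (auto simp: ma_rate_nonneg kI_nonneg kE_nonneg kF_nonneg kC_nonneg)

lemma total_rate_finite: "total_rate rate n \<noteq> \<top>"
proof -
  have "total_rate rate n \<le> (\<integral>\<^sup>+ b. ennreal (rate n b) \<partial>count_space UNIV)"
    by (rule total_rate_le_nn_integral) (rule rate_nonneg)
  also have "\<dots> = ennreal (flux n (\<lambda>_. 1))"
    using nn_integral_rate[of "\<lambda>_. 1" 1 n] by simp
  finally show ?thesis
    using neq_top_trans[OF ennreal_neq_top] by blast
qed

end

locale weighted_compartment_model = compartment_model R \<kappa> s kI kE kF kC \<mu> \<psi>
  for R :: "(('i::finite \<Rightarrow> nat) \<times> ('i \<Rightarrow> nat)) set" and \<kappa> s kI kE kF kC \<mu> \<psi> +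
  fixes w :: "'i \<Rightarrow> real" and c c' :: real
  assumes weight_pos: "\<And>j. 0 < w j"
    and c_pos: "0 < c"
    and chemistry_drift: "\<And>x. chem_gen R \<kappa> (species_weight w) x \<le> c * species_weight w x + c'"
begin

(* Fragmentation of x fires at rate kF x_s <= kF (w . x) / w_s and raises comp_weight by 1. *)
definition drift_rate :: real where
  "drift_rate = max c c' + kF / w s"

definition truncated_inflow_mean :: "real \<Rightarrow> real" where
  "truncated_inflow_mean K = (\<integral>x. min (species_weight w x + 1) K \<partial>\<mu>)"

lemma weight_nonneg: "0 \<le> w j"
  using weight_pos[of j] by simp

lemma drift_rate_pos: "0 < drift_rate"
  unfolding drift_rate_def using c_pos kF_nonneg weight_pos[of s] by (simp add: add_pos_nonneg)

lemma truncated_inflow_mean_nonneg: "0 \<le> K \<Longrightarrow> 0 \<le> truncated_inflow_mean K"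
  unfolding truncated_inflow_mean_def
  by (intro integral_nonneg_AE AE_I2) (simp add: species_weight_nonneg weight_nonneg add_nonneg_nonneg)

lemma eventually_truncated_inflow_mean_le:
  assumes "0 < \<delta>"
  shows "\<forall>\<^sub>F K in at_top. truncated_inflow_mean K \<le> \<delta> * K"
proof -
  have "((\<lambda>K. truncated_inflow_mean K / K) \<longlongrightarrow> 0) at_top"
    unfolding truncated_inflow_mean_def using measure_pmf.finite_measure_axioms
    by (rule tendsto_integral_min_div_at_top) (simp_all add: species_weight_nonneg weight_nonneg add_nonneg_nonneg)
  then have "\<forall>\<^sub>F K in at_top. truncated_inflow_mean K / K < \<delta>"
    using assms by (rule order_tendstoD)
  then show ?thesis
    using eventually_gt_at_top[of 0] by eventually_elim (simp add: field_simps)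
qed

lemma reaction_flux_le:
  assumes g: "\<And>b. g b \<le> comp_weight w b"
  shows "reaction_flux n g \<le> reaction_flux n (\<lambda>_. comp_weight w n)
    + (\<Sum>x\<in>set_mset n. real (count n x) * (c * species_weight w x + c'))"
proof -
  have "reaction_flux n g \<le> (\<Sum>x\<in>set_mset n. \<Sum>r\<in>R. real (count n x) * ma_rate \<kappa> r x *
      (comp_weight w n + (species_weight w (react r x) - species_weight w x)))"
    unfolding reaction_flux_def
  proof (intro sum_mono mult_left_mono)
    fix x r
    assume "x \<in> set_mset n" "r \<in> R"
    then show "g (n - {#x#} + {#react r x#}) \<le> comp_weight w n + (species_weight w (react r x) - species_weight w x)"
      using g[of "n - {#x#} + {#react r x#}"] by (simp add: comp_weight_remove1)
    show "0 \<le> real (count n x) * ma_rate \<kappa> r x"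
      using \<open>r \<in> R\<close> by (simp add: ma_rate_nonneg)
  qed
  also have "\<dots> = reaction_flux n (\<lambda>_. comp_weight w n)
      + (\<Sum>x\<in>set_mset n. real (count n x) * chem_gen R \<kappa> (species_weight w) x)"
    unfolding reaction_flux_def chem_gen_def
    by (simp add: distrib_left sum.distrib sum_distrib_left mult.assoc)
  also have "\<dots> \<le> reaction_flux n (\<lambda>_. comp_weight w n)
      + (\<Sum>x\<in>set_mset n. real (count n x) * (c * species_weight w x + c'))"
    by (intro add_left_mono sum_mono mult_left_mono chemistry_drift) simp
  finally show ?thesis .
qed

lemma inflow_flux_le:
  assumes "0 \<le> K"
  shows "inflow_flux n (\<lambda>b. min (comp_weight w b) K) \<le> inflow_flux n (\<lambda>_. comp_weight w n)
    + kI * truncated_inflow_mean K"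
proof -
  have weights_nonneg: "0 \<le> species_weight w x" "0 \<le> comp_weight w n'" for x n'
    by (simp_all add: species_weight_nonneg comp_weight_nonneg weight_nonneg)
  have integrable_min: "integrable \<mu> (\<lambda>x. min (f x) K)" if "\<And>x. 0 \<le> f x" for f :: "_ \<Rightarrow> real"
    using assms that by (intro measure_pmf.integrable_const_bound[where B = K]) auto
  have "min (comp_weight w (n + {#x#})) K \<le> comp_weight w n + min (species_weight w x + 1) K" for x
    using weights_nonneg(2)[of n] by (simp add: min_def)
  then have "(\<integral>x. min (comp_weight w (n + {#x#})) K \<partial>\<mu>)
      \<le> (\<integral>x. comp_weight w n + min (species_weight w x + 1) K \<partial>\<mu>)"
    using weights_nonneg
    by (intro integral_mono integrable_min Bochner_Integration.integrable_add) (simp_all add: add_nonneg_nonneg)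
  also have "\<dots> = comp_weight w n + (\<integral>x. min (species_weight w x + 1) K \<partial>\<mu>)"
    using weights_nonneg by (subst Bochner_Integration.integral_add) (simp_all add: integrable_min add_nonneg_nonneg)
  finally show ?thesis
    unfolding inflow_flux_def truncated_inflow_mean_def using kI_nonneg
    by (simp add: distrib_left[symmetric] mult_left_mono)
qed

lemma exit_flux_le:
  assumes g: "\<And>b. g b \<le> comp_weight w b"
  shows "exit_flux n g \<le> exit_flux n (\<lambda>_. comp_weight w n)"
  unfolding exit_flux_def
proof (intro sum_mono mult_left_mono)
  fix x
  assume "x \<in> set_mset n"
  then show "g (n - {#x#}) \<le> comp_weight w n"
    using g[of "n - {#x#}"] species_weight_nonneg[of w x, OF weight_nonneg] by (simp add: comp_weight_remove1)
qed (simp add: kE_nonneg)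

lemma fragmentation_flux_le:
  assumes g: "\<And>b. g b \<le> comp_weight w b"
  shows "fragmentation_flux n g \<le> fragmentation_flux n (\<lambda>_. comp_weight w n)
    + (\<Sum>x\<in>set_mset n. kF * real (x s) * real (count n x))"
  unfolding fragmentation_flux_def sum.distrib[symmetric]
proof (intro sum_mono)
  fix x
  assume x: "x \<in> set_mset n"
  have "(\<integral>y. g (n - {#x#} + {#y#} + {#(\<lambda>j. x j - y j)#}) \<partial>\<psi> x) \<le> (\<integral>y. comp_weight w n + 1 \<partial>\<psi> x)"
  proof (rule integral_mono_AE')
    show "AE y in \<psi> x. g (n - {#x#} + {#y#} + {#(\<lambda>j. x j - y j)#}) \<le> comp_weight w n + 1"
    proof (unfold AE_measure_pmf_iff, intro ballI)
      fix y
      assume "y \<in> set_pmf (\<psi> x)"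
      then have "species_weight w y + species_weight w (\<lambda>j. x j - y j) = species_weight w x"
        by (intro species_weight_diff_add fragment_le)
      then show "g (n - {#x#} + {#y#} + {#(\<lambda>j. x j - y j)#}) \<le> comp_weight w n + 1"
        using g[of "n - {#x#} + {#y#} + {#(\<lambda>j. x j - y j)#}"] x by (simp add: comp_weight_remove1)
    qed
  qed (use comp_weight_nonneg[of w n, OF weight_nonneg] in simp_all)
  then have "(\<integral>y. g (n - {#x#} + {#y#} + {#(\<lambda>j. x j - y j)#}) \<partial>\<psi> x) \<le> comp_weight w n + 1"
    by simp
  then have "kF * real (x s) * real (count n x) * (\<integral>y. g (n - {#x#} + {#y#} + {#(\<lambda>j. x j - y j)#}) \<partial>\<psi> x)
      \<le> kF * real (x s) * real (count n x) * (comp_weight w n + 1)"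
    by (rule mult_left_mono) (simp add: kF_nonneg)
  then show "kF * real (x s) * real (count n x) * (\<integral>y. g (n - {#x#} + {#y#} + {#(\<lambda>j. x j - y j)#}) \<partial>\<psi> x)
      \<le> kF * real (x s) * real (count n x) * (\<integral>y. comp_weight w n \<partial>\<psi> x) + kF * real (x s) * real (count n x)"
    by (simp add: distrib_left)
qed

lemma coagulation_flux_le:
  assumes g: "\<And>b. g b \<le> comp_weight w b"
  shows "coagulation_flux n g \<le> coagulation_flux n (\<lambda>_. comp_weight w n)"
proof -
  have merge_le: "g (n - {#x, y#} + {#(\<lambda>j. x j + y j)#}) \<le> comp_weight w n" if "{#x, y#} \<subseteq># n" for x y
    using g[of "n - {#x, y#} + {#(\<lambda>j. x j + y j)#}"] that by (simp add: comp_weight_diff species_weight_add)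
  have "kC * real (count n x choose 2) * g (n - {#x, x#} + {#(\<lambda>j. x j + x j)#})
      \<le> kC * real (count n x choose 2) * comp_weight w n" for x
  proof (cases "2 \<le> count n x")
    case True
    then have "{#x, x#} \<subseteq># n"
      by (simp add: subseteq_mset_def)
    then show ?thesis
      using kC_nonneg by (intro mult_left_mono merge_le) simp_all
  next
    case False
    then show ?thesis
      by (simp add: binomial_eq_0)
  qed
  moreover have "g (n - {#x, y#} + {#(\<lambda>j. x j + y j)#}) \<le> comp_weight w n"
    if "x \<in> set_mset n" "y \<in> set_mset n - {x}" for x y
    using that by (intro merge_le) (auto simp: subseteq_mset_def)
  ultimately show ?thesis
    unfolding coagulation_flux_def
    by (intro add_mono sum_mono) (auto intro: mult_left_mono simp: kC_nonneg)
qed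

lemma reaction_fragmentation_excess_le:
  "(\<Sum>x\<in>set_mset n. real (count n x) * (c * species_weight w x + c'))
     + (\<Sum>x\<in>set_mset n. kF * real (x s) * real (count n x))
   \<le> drift_rate * comp_weight w n"
proof -
  have "c * species_weight w x + c' + kF * real (x s) \<le> drift_rate * (species_weight w x + 1)" for x
  proof -
    have "c * species_weight w x + c' \<le> max c c' * (species_weight w x + 1)"
      using species_weight_nonneg[of w x, OF weight_nonneg]
      by (simp add: distrib_left mult_right_mono add_mono)
    moreover have "real (x s) \<le> (species_weight w x + 1) / w s"
      using coordinate_le_species_weight[of w s x, OF weight_nonneg] weight_pos[of s]
      by (simp add: field_simps)
    then have "kF * real (x s) \<le> kF * ((species_weight w x + 1) / w s)"
      by (rule mult_left_mono) (rule kF_nonneg)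
    then have "kF * real (x s) \<le> kF / w s * (species_weight w x + 1)"
      by simp
    ultimately show ?thesis
      unfolding drift_rate_def by (simp add: distrib_right)
  qed
  then have "(\<Sum>x\<in>set_mset n. real (count n x) * (c * species_weight w x + c' + kF * real (x s)))
      \<le> (\<Sum>x\<in>set_mset n. real (count n x) * (drift_rate * (species_weight w x + 1)))"
    by (intro sum_mono mult_left_mono) simp_all
  then show ?thesis
    by (simp add: comp_weight_def sum_mset_eq_sum_count sum_distrib_left sum.distrib algebra_simps)
qed

lemma flux_truncated_weight_le:
  assumes "0 \<le> K"
  shows "flux n (\<lambda>b. min (comp_weight w b) K)
    \<le> flux n (\<lambda>_. comp_weight w n) + drift_rate * comp_weight w n + kI * truncated_inflow_mean K"
  using reaction_flux_le[of "\<lambda>b. min (comp_weight w b) K" n] inflow_flux_le[OF assms, of n]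
    exit_flux_le[of "\<lambda>b. min (comp_weight w b) K" n] fragmentation_flux_le[of "\<lambda>b. min (comp_weight w b) K" n]
    coagulation_flux_le[of "\<lambda>b. min (comp_weight w b) K" n] reaction_fragmentation_excess_le[of n]
  unfolding flux_def by simp

lemma nn_integral_rate_truncated_weight_le:
  assumes K: "0 < K"
  defines "V \<equiv> \<lambda>b. min (comp_weight w b) K"
  shows "(\<integral>\<^sup>+ b. ennreal (rate a b) * ennreal (V b) \<partial>count_space UNIV)
    \<le> (\<integral>\<^sup>+ b. ennreal (rate a b) * ennreal (V a) \<partial>count_space UNIV)
      + ennreal (drift_rate * V a + kI * truncated_inflow_mean K)"
proof -
  have V: "0 \<le> V b" "V b \<le> K" for b
    using K by (simp_all add: V_def comp_weight_nonneg weight_nonneg)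
  have excess: "0 \<le> drift_rate * V a + kI * truncated_inflow_mean K"
    using V(1)[of a] K drift_rate_pos kI_nonneg truncated_inflow_mean_nonneg[of K] by simp
  show ?thesis
  proof (cases "comp_weight w a < K")
    case True
    then have "V a = comp_weight w a"
      by (simp add: V_def)
    then have "flux a V \<le> flux a (\<lambda>_. V a) + (drift_rate * V a + kI * truncated_inflow_mean K)"
      using flux_truncated_weight_le[of K a] K by (simp add: V_def add.assoc)
    moreover have "(\<integral>\<^sup>+ b. ennreal (rate a b) * ennreal (V b) \<partial>count_space UNIV) = ennreal (flux a V)"
      using V by (intro nn_integral_rate[where B = K])
    moreover have "(\<integral>\<^sup>+ b. ennreal (rate a b) * ennreal (V a) \<partial>count_space UNIV) = ennreal (flux a (\<lambda>_. V a))"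
      using V by (intro nn_integral_rate[where B = "V a"]) auto
    moreover have "0 \<le> flux a (\<lambda>_. V a)"
      using V by (simp add: flux_nonneg)
    ultimately show ?thesis
      using excess by (simp add: ennreal_plus[symmetric] del: ennreal_plus)
  next
    case False
    then have "V a = K"
      by (simp add: V_def)
    then have "(\<integral>\<^sup>+ b. ennreal (rate a b) * ennreal (V b) \<partial>count_space UNIV)
        \<le> (\<integral>\<^sup>+ b. ennreal (rate a b) * ennreal (V a) \<partial>count_space UNIV)"
      using V by (intro nn_integral_mono mult_left_mono ennreal_leI) simp_all
    then show ?thesis
      by (simp add: add_increasing2)
  qed
qed

lemma drift_bounded_truncated_weight:
  assumes K: "0 < K"
  shows "drift_bounded rate (\<lambda>b. min (comp_weight w b) K) drift_rate (kI * truncated_inflow_mean K)"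
  unfolding drift_bounded_def add.assoc
proof
  fix a
  show "(\<integral>\<^sup>+ b. ennreal (jump_rate rate a b) * ennreal (min (comp_weight w b) K) \<partial>count_space UNIV)
      \<le> ennreal (enn2real (total_rate rate a) * min (comp_weight w a) K
        + (drift_rate * min (comp_weight w a) K + kI * truncated_inflow_mean K))"
    using K drift_rate_pos kI_nonneg truncated_inflow_mean_nonneg[of K]
    by (intro jump_rate_drift_le rate_nonneg total_rate_finite nn_integral_rate_truncated_weight_le)
      (simp_all add: comp_weight_nonneg weight_nonneg)
qed

lemma small_Lyapunov_function:
  assumes \<epsilon>: "0 < \<epsilon>"
  shows "\<exists>V m D. 0 < m \<and> 0 \<le> D \<and> (\<forall>b. 0 \<le> V b) \<and> drift_bounded rate V drift_rate D
    \<and> finite {b. V b \<le> m} \<and> (V a + D / drift_rate) / m \<le> \<epsilon>"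
proof -
  define \<delta> where "\<delta> = \<epsilon> * drift_rate / (4 * (kI + 1))"
  have "0 < \<delta>"
    unfolding \<delta>_def using \<epsilon> drift_rate_pos kI_nonneg by simp
  then have "\<forall>\<^sub>F K in at_top. truncated_inflow_mean K \<le> \<delta> * K \<and> 4 * comp_weight w a / \<epsilon> \<le> K \<and> 0 < K"
    by (intro eventually_conj eventually_truncated_inflow_mean_le eventually_ge_at_top eventually_gt_at_top)
  then obtain K where K: "truncated_inflow_mean K \<le> \<delta> * K" "4 * comp_weight w a / \<epsilon> \<le> K" "0 < K"
    by (auto simp: eventually_at_top_linorder)
  define V where "V = (\<lambda>b. min (comp_weight w b) K)"
  define D where "D = kI * truncated_inflow_mean K"
  have "V a \<le> \<epsilon> * K / 4"
    using K(2) \<epsilon> by (simp add: V_def field_simps min.coboundedI1)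
  moreover have "D / drift_rate \<le> \<epsilon> * K / 4"
  proof -
    have "D / drift_rate \<le> kI * (\<delta> * K) / drift_rate"
      unfolding D_def using K(1) kI_nonneg drift_rate_pos by (intro divide_right_mono mult_left_mono) simp_all
    also have "\<dots> = \<epsilon> * K / 4 * (kI / (kI + 1))"
      using kI_nonneg drift_rate_pos by (simp add: \<delta>_def divide_simps)
    also have "\<dots> \<le> \<epsilon> * K / 4"
      using \<epsilon> K(3) kI_nonneg by (intro mult_left_le) simp_all
    finally show ?thesis .
  qed
  ultimately have "V a + D / drift_rate \<le> \<epsilon> * (K / 2)"
    by linarith
  then have "(V a + D / drift_rate) / (K / 2) \<le> \<epsilon>"
    using K(3) by (simp add: pos_divide_le_eq)
  moreover have "{b. V b \<le> K / 2} = {b. comp_weight w b \<le> K / 2}"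
    using K(3) by (auto simp: V_def min_def)
  then have "finite {b. V b \<le> K / 2}"
    using finite_comp_weight_le[of w "K / 2", OF weight_pos] by simp
  moreover have "0 \<le> D" "0 \<le> V b" for b
    using K(3) kI_nonneg truncated_inflow_mean_nonneg[of K]
    by (simp_all add: D_def V_def comp_weight_nonneg weight_nonneg)
  moreover have "drift_bounded rate V drift_rate D"
    unfolding V_def D_def using K(3) by (rule drift_bounded_truncated_weight)
  ultimately show ?thesis
    using K(3) by (intro exI[of _ V] exI[of _ "K / 2"] exI[of _ D]) auto
qed

end

theorem theorem3p1:
  fixes R :: "(('i::finite \<Rightarrow> nat) \<times> ('i \<Rightarrow> nat)) set"
    and \<kappa> :: "('i \<Rightarrow> nat) \<times> ('i \<Rightarrow> nat) \<Rightarrow> real"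
    and s :: 'i
    and kI kE kF kC :: real
    and \<mu> :: "('i \<Rightarrow> nat) pmf"
    and \<psi> :: "('i \<Rightarrow> nat) \<Rightarrow> ('i \<Rightarrow> nat) pmf"
    and w :: "'i \<Rightarrow> real"
    and c c' :: real
  assumes "finite R"
    and "\<forall>r\<in>R. \<kappa> r \<ge> 0"
    and "kI \<ge> 0" "kE \<ge> 0" "kF \<ge> 0" "kC \<ge> 0"
    and "\<forall>x. set_pmf (\<psi> x) \<subseteq> {y. \<forall>j. y j \<le> x j}"
    and "\<forall>j. w j > 0"
    and "c > 0" "c' > 0"
    and "\<forall>x. chem_gen R \<kappa> (\<lambda>z. \<Sum>j\<in>UNIV. w j * real (z j)) x
              \<le> c * (\<Sum>j\<in>UNIV. w j * real (x j)) + c'"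
  shows "\<not> ctmc_explosive (comp_rate R \<kappa> s kI kE kF kC \<mu> \<psi>)"
proof -
  interpret weighted_compartment_model R \<kappa> s kI kE kF kC \<mu> \<psi> w c c'
    using assms by unfold_locales (auto simp: species_weight_def[abs_def])
  show ?thesis
    by (rule not_ctmc_explosive_if_Lyapunov[OF total_rate_finite drift_rate_pos small_Lyapunov_function])
qed

end
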